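(* Assume Assumption (S). For Runge–Kutta coefficients $d_{\ell\kappa}$ and source functions $g^{n,\kappa}\in L^2(\Omega)$, let $G^{n,\ell,*}\in\mathbb V^k$ be defined by $(G^{n,\ell,*},\omega)_*=\sum_{0\le\kappa\le\ell}d_{\ell\kappa}(g^{n,\kappa},M^*\omega)$ for all $\omega\in\mathbb V^k$. Then there is a constant $C>0$ independent of $n$ (and of the mesh) such that $$\|G^{n,\ell,*}\|_*^2\le C\sum_{\kappa=0}^\ell\|g^{n,\kappa}\|^2,\qquad0\le\ell\le s-1.$$
   Context: Let $\Omega=[a,b]$ be partitioned into finitely many cells $I_i=[x_{i-\frac12},x_{i+\frac12}]$ with sizes $h_i$, $h=\max_ih_i$, quasi-uniform ($h\le Ch_i$, fixed $C$). $(\cdot,\cdot)$, $\|\cdot\|$: $L^2(\Omega)$ inner product and norm; $(\cdot,\cdot)_{I_i}$: $L^2(I_i)$ inner product. $\mathbb V^k=\{v\in L^2(\Omega): v|_{I_i}\in\mathbb P^k(I_i)\ \forall i\}$. Each $I_i$ has subdivision points $x_{i-\frac12}=x_{i,0}<x_{i,1}<\dots<x_{i,k}<x_{i,k+1}=x_{i+\frac12}$, control volumes $I_{i,j}=[x_{i,j},x_{i,j+1}]$; $\mathbb V^{k,*}$ = functions constant on each $I_{i,j}$. Quadrature on $I_i$: $Q_i^k(v)=\sum_{j=0}^{k+1}A_{i,j}v(x_{i,j})$, error $R_i^k(v)=\int_{I_i}v\,dx-Q_i^k(v)$, exact on $\mathbb P^{k-1}(I_i)$. $M^*:\mathbb V^k\to\mathbb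 V^{k,*}$: for $v=\omega|_{I_i}$, $(M^*\omega)|_{I_{i,0}}=v(x_{i-\frac12})+A_{i,0}v'(x_{i-\frac12})$, $(M^*\omega)|_{I_{i,j}}-(M^*\omega)|_{I_{i,j-1}}=A_{i,j}v'(x_{i,j})$, $j=1,\dots,k$ (one-sided values from inside $I_i$). $L_{i,\ell}$: shifted Legendre polynomial of degree $\ell$ on $I_i$, $L_{i,\ell}(x_{i+\frac12})=1$, $(L_{i,\ell},L_{i,m})_{I_i}=\delta_{\ell m}h_i/(2\ell+1)$. Assumption (S): $k\ge1$ and for every $i$, $R_i^k$ vanishes on $\mathbb P^{2k-1}(I_i)$ and $\frac{h_i}{2k-1}-Q_i^k(L_{i,k+1}L_{i,k-1})>0$; then $(v,\omega)_*:=(v,M^*\omega)$ is an inner product on $\mathbb V^k$, $\|v\|_*=\sqrt{(v,v)_*}$. The $d_{\ell\kappa}$ ($0\le\kappa\le\ell\le s-1$) are fixed coefficients of an explicit $s$-stage Runge–Kutta method. *)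

theory Defs
  imports "HOL-Analysis.Analysis" "HOL-Computational_Algebra.Polynomial"
begin

text \<open>Mesh on Omega = [xs 0, xs N]: cells I_i = [xs i, xs (Suc i)], i < N.\<close>
definition mesh :: "nat \<Rightarrow> (nat \<Rightarrow> real) \<Rightarrow> bool" where
  "mesh N xs \<longleftrightarrow> N \<ge> 1 \<and> (\<forall>i<N. xs i < xs (Suc i))"

definition cell_size :: "(nat \<Rightarrow> real) \<Rightarrow> nat \<Rightarrow> real" where
  "cell_size xs i = xs (Suc i) - xs i"

definition max_size :: "nat \<Rightarrow> (nat \<Rightarrow> real) \<Rightarrow> real" where
  "max_size N xs = Max (cell_size xs ` {..<N})"

definition quasi_uniform :: "real \<Rightarrow> nat \<Rightarrow> (nat \<Rightarrow> real) \<Rightarrow> bool" where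
  "quasi_uniform Cq N xs \<longleftrightarrow> (\<forall>i<N. max_size N xs \<le> Cq * cell_size xs i)"

text \<open>Shifted Legendre polynomial of degree l on the reference cell [0,1] (Rodrigues formula),
  normalised so that its value at 1 is 1.\<close>
definition ref_legendre :: "nat \<Rightarrow> real poly" where
  "ref_legendre l = smult (1 / fact l) ((pderiv ^^ l) ([:0, -1, 1:] ^ l))"

definition ref_quad :: "nat \<Rightarrow> (nat \<Rightarrow> real) \<Rightarrow> (nat \<Rightarrow> real) \<Rightarrow> real poly \<Rightarrow> real" where
  "ref_quad k \<xi> \<omega> p = (\<Sum>j\<le>Suc k. \<omega> j * poly p (\<xi> j))"

text \<open>Assumption (S), on the reference cell [0,1] (h = 1).\<close>
definition assumption_S :: "nat \<Rightarrow> (nat \<Rightarrow> real) \<Rightarrow> (nat \<Rightarrow> real) \<Rightarrow> bool" where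
  "assumption_S k \<xi> \<omega> \<longleftrightarrow>
     k \<ge> 1 \<and> \<xi> 0 = 0 \<and> \<xi> (Suc k) = 1 \<and> (\<forall>j\<le>k. \<xi> j < \<xi> (Suc j)) \<and>
     (\<forall>p. degree p \<le> 2 * k - 1 \<longrightarrow> integral {0..1} (poly p) = ref_quad k \<xi> \<omega> p) \<and>
     1 / (2 * real k - 1) - ref_quad k \<xi> \<omega> (ref_legendre (Suc k) * ref_legendre (k - 1)) > 0"

definition node :: "(nat \<Rightarrow> real) \<Rightarrow> (nat \<Rightarrow> real) \<Rightarrow> nat \<Rightarrow> nat \<Rightarrow> real" where
  "node xs \<xi> i j = xs i + cell_size xs i * \<xi> j"

definition weight :: "(nat \<Rightarrow> real) \<Rightarrow> (nat \<Rightarrow> real) \<Rightarrow> nat \<Rightarrow> nat \<Rightarrow> real" where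
  "weight xs \<omega> i j = cell_size xs i * \<omega> j"

text \<open>Value of M^* w on control volume [X j, X (Suc j)] of a cell with nodes X, weights A,
  where p = w restricted to the cell.\<close>
primrec mstar_coef :: "(nat \<Rightarrow> real) \<Rightarrow> (nat \<Rightarrow> real) \<Rightarrow> real poly \<Rightarrow> nat \<Rightarrow> real" where
  "mstar_coef X A p 0 = poly p (X 0) + A 0 * poly (pderiv p) (X 0)"
| "mstar_coef X A p (Suc j) = mstar_coef X A p j + A (Suc j) * poly (pderiv p) (X (Suc j))"

definition Vk :: "nat \<Rightarrow> nat \<Rightarrow> (nat \<Rightarrow> real poly) \<Rightarrow> bool" where
  "Vk k N W \<longleftrightarrow> (\<forall>i<N. degree (W i) \<le> k)"

text \<open>L^2 pairing (f, M^* W), where f i is the function used on cell i.\<close>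
definition pair_Mstar :: "nat \<Rightarrow> nat \<Rightarrow> (nat \<Rightarrow> real) \<Rightarrow> (nat \<Rightarrow> real) \<Rightarrow> (nat \<Rightarrow> real) \<Rightarrow>
    (nat \<Rightarrow> real \<Rightarrow> real) \<Rightarrow> (nat \<Rightarrow> real poly) \<Rightarrow> real" where
  "pair_Mstar k N xs \<xi> \<omega> f W =
     (\<Sum>i<N. \<Sum>j\<le>k. mstar_coef (node xs \<xi> i) (weight xs \<omega> i) (W i) j *
        (LBINT x:{node xs \<xi> i j..node xs \<xi> i (Suc j)}. f i x))"

definition star_ip :: "nat \<Rightarrow> nat \<Rightarrow> (nat \<Rightarrow> real) \<Rightarrow> (nat \<Rightarrow> real) \<Rightarrow> (nat \<Rightarrow> real) \<Rightarrow>
    (nat \<Rightarrow> real poly) \<Rightarrow> (nat \<Rightarrow> real poly) \<Rightarrow> real" where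
  "star_ip k N xs \<xi> \<omega> V W = pair_Mstar k N xs \<xi> \<omega> (\<lambda>i. poly (V i)) W"

definition L2_on :: "real set \<Rightarrow> (real \<Rightarrow> real) \<Rightarrow> bool" where
  "L2_on S g \<longleftrightarrow> set_borel_measurable lborel S g \<and> set_integrable lborel S (\<lambda>x. (g x)\<^sup>2)"

definition L2_norm_sq :: "real set \<Rightarrow> (real \<Rightarrow> real) \<Rightarrow> real" where
  "L2_norm_sq S g = (LBINT x:S. (g x)\<^sup>2)"

end

theory Submission
  imports Defs
begin

(* On the reference cell expand v in P^k as v = sum_n b_n L_n and let V be an antiderivative.
   Summation by parts and exactness of the quadrature on P^(2k-1) turn (v, M^* v) into the
   integral of v^2 plus the quadrature error of v' V, and orthogonality leaves
     (v, M^* v) = sum_n b_n^2 / (2n+1) + b_k^2 rho,   rho = R(L_k' * antiderivative of L_k).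
   Assumption (S) says exactly that 1/(2k+1) + rho > 0, so (v, M^* v) dominates sum_n b_n^2,
   which by Cauchy-Schwarz dominates ||M^* v||^2.  An affine change of variables carries this to
   every cell with the same constant K, so ||M^* G||^2 <= K ||G||_*^2 on any mesh.  Testing the
   defining relation of G with omega = G and applying Young's inequality to each (g, M^* G) gives
   ||G||_*^2 <= D (eps/2 ||M^* G||^2 + 1/(2 eps) sum ||g||^2), with D bounding the sums of |d|;
   eps = 1/(D K) absorbs the first term. *)

section \<open>Integrals of real polynomials\<close>

lemma integral_poly_pderiv:
  fixes p :: "real poly"
  assumes "a \<le> b"
  shows "integral {a..b} (poly (pderiv p)) = poly p b - poly p a"
proof -
  have "(poly (pderiv p) has_integral (poly p b - poly p a)) {a..b}"
    by (rule fundamental_theorem_of_calculus[OF assms])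
       (auto intro!: DERIV_subset[OF poly_DERIV]
         simp: has_real_derivative_iff_has_vector_derivative[symmetric])
  then show ?thesis
    by (rule integral_unique)
qed

lemma set_integral_poly_pderiv:
  fixes p :: "real poly"
  assumes "a \<le> b"
  shows "(LBINT x:{a..b}. poly (pderiv p) x) = poly p b - poly p a"
  unfolding set_lebesgue_integral_def
  by (rule integral_FTC_atLeastAtMost[OF assms])
     (auto intro!: DERIV_subset[OF poly_DERIV] continuous_intros
       simp: has_real_derivative_iff_has_vector_derivative[symmetric])

lemma integrable_on_poly: "poly (p :: real poly) integrable_on {a..b}"
  by (rule integrable_continuous_interval) (auto intro: continuous_intros)

definition antideriv :: "'a::field_char_0 poly \<Rightarrow> 'a poly" where
  "antideriv p = (\<Sum>i\<le>degree p. monom (coeff p i / of_nat (Suc i)) (Suc i))"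

lemma pderiv_sum: "pderiv (sum f A) = (\<Sum>x\<in>A. pderiv (f x))"
  by (induction A rule: infinite_finite_induct) (simp_all add: pderiv_add)

lemma pderiv_antideriv [simp]: "pderiv (antideriv p) = p"
proof -
  have "pderiv (antideriv p) = (\<Sum>i\<le>degree p. monom (coeff p i) i)"
    unfolding antideriv_def pderiv_sum pderiv_monom
    by (intro sum.cong) (auto simp del: of_nat_Suc)
  then show ?thesis
    by (simp add: poly_as_sum_of_monoms)
qed

lemma degree_antideriv: "degree (antideriv p) \<le> Suc (degree p)"
  unfolding antideriv_def
  by (rule degree_sum_le) (auto intro: order.trans[OF degree_monom_le])

lemma coeff_antideriv: "coeff (antideriv p) (Suc n) = coeff p n / of_nat (Suc n)"
proof -
  have "coeff p n = of_nat (Suc n) * coeff (antideriv p) (Suc n)"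
    using coeff_pderiv[of "antideriv p" n] by simp
  then show ?thesis
    by (simp add: field_simps del: of_nat_Suc)
qed

lemma poly_diff_eq_if_pderiv_eq:
  fixes p q :: "'a::field_char_0 poly"
  assumes "pderiv p = pderiv q"
  shows "poly p y - poly p x = poly q y - poly q x"
proof -
  have "pderiv (p - q) = 0"
    using assms by (simp add: pderiv_diff)
  then obtain c where "p - q = [:c:]"
    by (metis degree_0_id pderiv_eq_0_iff)
  then have "poly (p - q) y = poly (p - q) x"
    by simp
  then show ?thesis
    by (simp add: algebra_simps)
qed

lemma coeff_mult_degree_le_sum:
  fixes p q :: "'a::comm_semiring_0 poly"
  assumes "degree p \<le> a" "degree q \<le> b"
  shows "coeff (p * q) (a + b) = coeff p a * coeff q b"
proof -
  have "coeff (p * q) (a + b) = (\<Sum>i\<le>a + b. coeff p i * coeff q (a + b - i))"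
    by (simp add: coeff_mult)
  also have "\<dots> = (\<Sum>i\<le>a + b. if i = a then coeff p a * coeff q b else 0)"
  proof (rule sum.cong)
    fix i
    show "coeff p i * coeff q (a + b - i) = (if i = a then coeff p a * coeff q b else 0)"
    proof (cases "i = a")
      case False
      then have "i > a \<or> a + b - i > b"
        by auto
      then show ?thesis
        using assms False by (auto simp: coeff_eq_0)
    qed simp
  qed simp
  finally show ?thesis
    by simp
qed

definition integral01 :: "real poly \<Rightarrow> real" where
  "integral01 p = integral {0..1} (poly p)"

lemma integral01_pderiv: "integral01 (pderiv p) = poly p 1 - poly p 0"
  unfolding integral01_def by (rule integral_poly_pderiv) simp

lemma integral01_add: "integral01 (p + q) = integral01 p + integral01 q"
  using integral_add[OF integrable_on_poly integrable_on_poly, of 0 1 p q]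
  by (simp add: integral01_def poly_add[abs_def])

lemma integral01_diff: "integral01 (p - q) = integral01 p - integral01 q"
  using integral_diff[OF integrable_on_poly integrable_on_poly, of 0 1 p q]
  by (simp add: integral01_def poly_diff[abs_def])

lemma integral01_smult: "integral01 (smult c p) = c * integral01 p"
  by (simp add: integral01_def poly_smult[abs_def])

lemma integral01_minus: "integral01 (- p) = - integral01 p"
  using integral01_smult[of "-1" p] by simp

lemma integral01_0 [simp]: "integral01 0 = 0"
  using integral01_smult[of 0 0] by simp

lemma integral01_sum: "integral01 (sum f A) = (\<Sum>x\<in>A. integral01 (f x))"
  by (induction A rule: infinite_finite_induct) (simp_all add: integral01_add)

lemma integral01_by_parts:
  "integral01 (p * pderiv q) = poly (p * q) 1 - poly (p * q) 0 - integral01 (pderiv p * q)"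
  using integral01_pderiv[of "p * q"] by (simp add: pderiv_mult integral01_add algebra_simps)

section \<open>Shifted Legendre polynomials\<close>

definition rodrigues_base :: "real poly" where
  "rodrigues_base = [:0, -1, 1:]"

definition legendre_lc :: "nat \<Rightarrow> real" where
  "legendre_lc n = fact (2 * n) / (fact n)\<^sup>2"

definition legendre_series :: "nat \<Rightarrow> (nat \<Rightarrow> real) \<Rightarrow> real poly" where
  "legendre_series m b = (\<Sum>n\<le>m. smult (b n) (ref_legendre n))"

lemma ref_legendre_rodrigues: "ref_legendre n = smult (1 / fact n) ((pderiv ^^ n) (rodrigues_base ^ n))"
  by (simp add: ref_legendre_def rodrigues_base_def)

lemma ref_legendre_0: "ref_legendre 0 = 1"
  by (simp add: ref_legendre_def)

lemma legendre_lc_pos: "legendre_lc n > 0"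
  by (simp add: legendre_lc_def)

lemma pochhammer_Suc_mult_fact: "pochhammer (real (Suc n)) m * fact n = fact (n + m)"
proof (induction m)
  case (Suc m)
  have "pochhammer (real (Suc n)) (Suc m) * fact n
      = (pochhammer (real (Suc n)) m * fact n) * (real (Suc n) + real m)"
    by (simp add: pochhammer_Suc)
  also have "\<dots> = fact (n + Suc m)"
    using Suc.IH by (simp add: fact_Suc algebra_simps)
  finally show ?case .
qed simp

lemma degree_rodrigues_base_power: "degree (rodrigues_base ^ n) = 2 * n"
  and coeff_rodrigues_base_power: "coeff (rodrigues_base ^ n) (2 * n) = 1"
proof -
  have base: "degree rodrigues_base = 2" "lead_coeff rodrigues_base = 1"
    by (simp_all add: rodrigues_base_def)
  then have "rodrigues_base \<noteq> 0"
    by auto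
  with base show "degree (rodrigues_base ^ n) = 2 * n"
    by (simp add: degree_power_eq)
  then show "coeff (rodrigues_base ^ n) (2 * n) = 1"
    using lead_coeff_power[of rodrigues_base n] base by simp
qed

lemma coeff_ref_legendre_top: "coeff (ref_legendre n) n = legendre_lc n"
proof -
  have top: "coeff (rodrigues_base ^ n) (n + n) = 1"
    using coeff_rodrigues_base_power[of n] by (simp add: mult_2)
  have "coeff (ref_legendre n) n = (1 / fact n) * (pochhammer (real (Suc n)) n * coeff (rodrigues_base ^ n) (n + n))"
    by (simp add: ref_legendre_rodrigues coeff_higher_pderiv)
  also have "\<dots> = (pochhammer (real (Suc n)) n * fact n) / (fact n)\<^sup>2"
    unfolding top by (simp add: power2_eq_square)
  also have "\<dots> = legendre_lc n"
    unfolding pochhammer_Suc_mult_fact legendre_lc_def by (simp add: mult_2)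
  finally show ?thesis .
qed

lemma degree_ref_legendre: "degree (ref_legendre n) = n"
proof -
  have "degree (ref_legendre n) \<le> n"
    by (simp add: ref_legendre_rodrigues degree_higher_pderiv degree_rodrigues_base_power)
  moreover have "coeff (ref_legendre n) n \<noteq> 0"
    using coeff_ref_legendre_top legendre_lc_pos by (metis less_irrefl)
  ultimately show ?thesis
    by (meson le_antisym le_degree)
qed

lemma higher_pderiv_eq_0:
  fixes p :: "real poly"
  assumes "\<forall>i\<ge>j. coeff p i = 0"
  shows "(pderiv ^^ j) p = 0"
  by (rule poly_eqI) (simp add: coeff_higher_pderiv assms)

lemma higher_pderiv_rodrigues_base_power:
  assumes "j \<le> n"
  shows "\<exists>h. (pderiv ^^ j) (rodrigues_base ^ n) = rodrigues_base ^ (n - j) * h"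
  using assms
proof (induction j)
  case 0
  show ?case
    by (intro exI[of _ 1]) simp
next
  case (Suc j)
  then obtain h where h: "(pderiv ^^ j) (rodrigues_base ^ n) = rodrigues_base ^ (n - j) * h"
    by auto
  obtain m where m: "n - j = Suc m" "n - Suc j = m"
    using Suc.prems by (metis Suc_diff_Suc Suc_le_lessD)
  have "(pderiv ^^ Suc j) (rodrigues_base ^ n) = pderiv (rodrigues_base ^ Suc m * h)"
    using h m by simp
  also have "\<dots> = rodrigues_base ^ m *
      (rodrigues_base * pderiv h + smult (of_nat (Suc m)) (h * pderiv rodrigues_base))"
    by (simp add: pderiv_mult pderiv_power_Suc algebra_simps del: power_Suc)
       (simp add: algebra_simps)
  finally show ?case
    using m by blast
qed

lemma poly_higher_pderiv_rodrigues_base_power: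
  assumes "j < n"
  shows "poly ((pderiv ^^ j) (rodrigues_base ^ n)) 0 = 0"
    and "poly ((pderiv ^^ j) (rodrigues_base ^ n)) 1 = 0"
proof -
  obtain h where h: "(pderiv ^^ j) (rodrigues_base ^ n) = rodrigues_base ^ (n - j) * h"
    using higher_pderiv_rodrigues_base_power assms by fastforce
  have "n - j > 0"
    using assms by simp
  then show "poly ((pderiv ^^ j) (rodrigues_base ^ n)) 0 = 0"
    and "poly ((pderiv ^^ j) (rodrigues_base ^ n)) 1 = 0"
    unfolding h by (simp_all add: rodrigues_base_def)
qed

lemma integral01_mult_higher_pderiv_rodrigues:
  assumes "j \<le> n"
  shows "integral01 (p * (pderiv ^^ n) (rodrigues_base ^ n))
    = (-1) ^ j * integral01 ((pderiv ^^ j) p * (pderiv ^^ (n - j)) (rodrigues_base ^ n))"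
  using assms
proof (induction j)
  case (Suc j)
  define D where "D = (pderiv ^^ (n - Suc j)) (rodrigues_base ^ n)"
  have "n - j = Suc (n - Suc j)"
    using Suc.prems by simp
  then have "(pderiv ^^ (n - j)) (rodrigues_base ^ n) = pderiv D"
    by (simp add: D_def)
  then have "integral01 ((pderiv ^^ j) p * (pderiv ^^ (n - j)) (rodrigues_base ^ n))
      = - integral01 ((pderiv ^^ Suc j) p * D)"
    using poly_higher_pderiv_rodrigues_base_power[of "n - Suc j" n] Suc.prems
    by (simp add: integral01_by_parts D_def)
  with Suc show ?case
    by (simp add: D_def)
qed simp

lemma integral01_mult_ref_legendre:
  assumes "\<forall>i\<ge>n. coeff p i = 0"
  shows "integral01 (p * ref_legendre n) = 0"
  using integral01_mult_higher_pderiv_rodrigues[of n n p] higher_pderiv_eq_0[OF assms]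
  by (simp add: ref_legendre_rodrigues integral01_smult)

lemma integral01_ref_legendre_orthogonal:
  assumes "m \<noteq> n"
  shows "integral01 (ref_legendre m * ref_legendre n) = 0"
proof (cases "m < n")
  case True
  then show ?thesis
    by (intro integral01_mult_ref_legendre) (simp add: coeff_eq_0 degree_ref_legendre)
next
  case False
  then have "integral01 (ref_legendre n * ref_legendre m) = 0"
    using assms by (intro integral01_mult_ref_legendre) (simp add: coeff_eq_0 degree_ref_legendre)
  then show ?thesis
    by (simp add: mult.commute)
qed

lemma integral01_beta: "integral01 ([:0, 1:] ^ a * [:1, -1:] ^ b) = fact a * fact b / fact (a + b + 1)"
proof (induction b arbitrary: a)
  case 0
  have "[:0, 1:] ^ a = pderiv (smult (1 / real (Suc a)) ([:0, 1:] ^ Suc a))"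
    by (simp add: pderiv_smult pderiv_power_Suc del: power_Suc of_nat_Suc) (simp add: pderiv_pCons)
  then have "integral01 ([:0, 1:] ^ a) = 1 / real (Suc a)"
    by (simp add: integral01_pderiv del: of_nat_Suc power_Suc)
  then show ?case
    by (simp add: fact_Suc)
next
  case (Suc b)
  define p where "p = smult (1 / real (Suc a)) ([:0, 1:] ^ Suc a)"
  define q where "q = ([:1, -1:] :: real poly) ^ Suc b"
  have p: "pderiv p = [:0, 1:] ^ a"
    unfolding p_def
    by (simp add: pderiv_smult pderiv_power_Suc del: power_Suc of_nat_Suc) (simp add: pderiv_pCons)
  have q: "pderiv q = - smult (real (Suc b)) ([:1, -1:] ^ b)"
    unfolding q_def by (simp add: pderiv_power_Suc del: power_Suc of_nat_Suc) (simp add: pderiv_pCons)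
  have "integral01 ([:0, 1:] ^ a * [:1, -1:] ^ Suc b) = integral01 (q * pderiv p)"
    by (simp add: p q_def mult.commute)
  also have "\<dots> = - integral01 (pderiv q * p)"
    by (simp add: integral01_by_parts p_def q_def)
  also have "\<dots> = real (Suc b) / real (Suc a) * integral01 ([:0, 1:] ^ Suc a * [:1, -1:] ^ b)"
  proof -
    have "pderiv q * p = - smult (real (Suc b) * (1 / real (Suc a))) ([:1, -1:] ^ b * [:0, 1:] ^ Suc a)"
      unfolding q p_def
      by (simp only: mult_smult_left mult_smult_right smult_smult mult_minus_left smult_minus_right
          mult.commute[of "1 / real (Suc a)"])
    then show ?thesis
      by (simp only: integral01_smult integral01_minus mult.commute[of "[:1, -1:] ^ b"]) simp
  qed
  also have "\<dots> = fact a * fact (Suc b) / fact (a + Suc b + 1)"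
    unfolding Suc.IH[of "Suc a"] by (simp add: fact_Suc del: of_nat_Suc)
  finally show ?case .
qed

lemma higher_pderiv_monom_self: "(pderiv ^^ n) (monom (1 :: real) n) = [:fact n:]"
proof (rule poly_eqI)
  fix i
  show "coeff ((pderiv ^^ n) (monom (1 :: real) n)) i = coeff [:fact n:] i"
    by (cases i) (simp_all add: coeff_higher_pderiv pochhammer_fact[symmetric] coeff_monom)
qed

lemma rodrigues_base_power: "rodrigues_base ^ n = smult ((-1) ^ n) ([:0, 1:] ^ n * [:1, -1:] ^ n)"
proof -
  have "rodrigues_base = smult (-1) ([:0, 1:] * [:1, -1:])"
    by (simp add: rodrigues_base_def)
  then show ?thesis
    by (metis smult_power power_mult_distrib)
qed

lemma integral01_ref_legendre_square: "integral01 (ref_legendre n * ref_legendre n) = 1 / (2 * real n + 1)"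
proof -
  define u where "u = ref_legendre n - smult (legendre_lc n) (monom 1 n)"
  have u: "\<forall>i\<ge>n. coeff u i = 0"
    unfolding u_def using coeff_ref_legendre_top[of n] degree_ref_legendre[of n]
    by (auto simp: coeff_eq_0)
  have "ref_legendre n = u + smult (legendre_lc n) (monom 1 n)"
    by (simp add: u_def)
  then have "integral01 (ref_legendre n * ref_legendre n)
      = integral01 (u * ref_legendre n) + legendre_lc n * integral01 (monom 1 n * ref_legendre n)"
    by (metis integral01_add integral01_smult distrib_right mult_smult_left)
  also have "integral01 (u * ref_legendre n) = 0"
    by (rule integral01_mult_ref_legendre[OF u])
  also have "integral01 (monom 1 n * ref_legendre n)
      = (1 / fact n) * integral01 (monom 1 n * (pderiv ^^ n) (rodrigues_base ^ n))"
    by (simp add: ref_legendre_rodrigues integral01_smult)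
  also have "integral01 (monom 1 n * (pderiv ^^ n) (rodrigues_base ^ n))
      = (-1) ^ n * integral01 ([:fact n:] * rodrigues_base ^ n)"
    using integral01_mult_higher_pderiv_rodrigues[of n n] by (simp add: higher_pderiv_monom_self)
  also have "[:fact n:] * rodrigues_base ^ n = smult (fact n * (-1) ^ n) ([:0, 1:] ^ n * [:1, -1:] ^ n)"
    by (simp add: rodrigues_base_power mult.commute)
  also have "integral01 \<dots> = fact n * (-1) ^ n * (fact n * fact n / fact (2 * n + 1))"
    by (simp only: integral01_smult integral01_beta mult_2)
  finally have "integral01 (ref_legendre n * ref_legendre n) = legendre_lc n * (fact n * fact n / fact (2 * n + 1))"
    by (simp add: power_mult_distrib[symmetric])
  also have "\<dots> = 1 / (2 * real n + 1)"
    by (simp add: legendre_lc_def power2_eq_square fact_Suc)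
  finally show ?thesis .
qed

lemma ref_legendre_basis: "degree v \<le> m \<Longrightarrow> \<exists>b. v = legendre_series m b"
  unfolding legendre_series_def
proof (induction m arbitrary: v)
  case 0
  then have "v = smult (coeff v 0) (ref_legendre 0)"
    by (metis degree_0_id le_0_eq ref_legendre_0 smult_one)
  then show ?case
    by auto
next
  case (Suc m)
  define c where "c = coeff v (Suc m) / legendre_lc (Suc m)"
  have "degree (v - smult c (ref_legendre (Suc m))) \<le> m"
  proof (rule degree_le, intro allI impI)
    fix i
    assume "m < i"
    then show "coeff (v - smult c (ref_legendre (Suc m))) i = 0"
      using Suc.prems degree_ref_legendre[of "Suc m"] coeff_ref_legendre_top[of "Suc m"]
        legendre_lc_pos[of "Suc m"]
      by (cases "i = Suc m") (auto simp: c_def coeff_eq_0)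
  qed
  then obtain b where b: "v - smult c (ref_legendre (Suc m)) = (\<Sum>n\<le>m. smult (b n) (ref_legendre n))"
    using Suc.IH by blast
  have "v = (\<Sum>n\<le>Suc m. smult ((b(Suc m := c)) n) (ref_legendre n))"
    by (simp add: b[symmetric])
  then show ?case
    by blast
qed

lemma integral01_legendre_series_square:
  "integral01 (legendre_series m b * legendre_series m b) = (\<Sum>n\<le>m. (b n)\<^sup>2 / (2 * real n + 1))"
proof -
  have "legendre_series m b * legendre_series m b
      = (\<Sum>n\<le>m. \<Sum>n'\<le>m. smult (b n * b n') (ref_legendre n * ref_legendre n'))"
    by (simp add: legendre_series_def sum_distrib_left sum_distrib_right mult_ac)
  then have "integral01 (legendre_series m b * legendre_series m b)
      = (\<Sum>n\<le>m. \<Sum>n'\<le>m. b n * b n' * integral01 (ref_legendre n * ref_legendre n'))"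
    by (simp add: integral01_sum integral01_smult)
  also have "\<dots> = (\<Sum>n\<le>m. \<Sum>n'\<le>m. if n' = n then (b n)\<^sup>2 / (2 * real n + 1) else 0)"
    by (intro sum.cong refl)
       (simp add: integral01_ref_legendre_orthogonal integral01_ref_legendre_square power2_eq_square)
  finally show ?thesis
    by simp
qed

lemma legendre_lc_Suc: "legendre_lc (Suc n) * real (Suc n) = legendre_lc n * (2 * (2 * real n + 1))"
proof -
  have "fact (2 * Suc n) = (fact (2 * n) :: real) * ((2 * real n + 1) * (2 * real (Suc n)))"
    by (simp add: fact_Suc algebra_simps)
  moreover have "(fact (Suc n))\<^sup>2 = (real (Suc n))\<^sup>2 * (fact n :: real)\<^sup>2"
    by (simp add: power_mult_distrib del: of_nat_Suc)
  ultimately show ?thesis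
    unfolding legendre_lc_def by (simp add: power2_eq_square field_simps del: of_nat_Suc)
qed

lemma legendre_lc_neighbours:
  assumes "k \<ge> 1"
  shows "legendre_lc (Suc k) * legendre_lc (k - 1) * (2 * real k - 1) * (real k + 1)
    = (2 * real k + 1) * real k * (legendre_lc k)\<^sup>2"
proof -
  obtain m where k: "k = Suc m"
    using assms by (cases k) auto
  have "legendre_lc (Suc (Suc m)) * legendre_lc m * (2 * real (Suc m) - 1) * (real (Suc m) + 1)
      = (legendre_lc (Suc (Suc m)) * real (Suc (Suc m))) * legendre_lc m * (2 * real m + 1)"
    by (simp add: algebra_simps)
  also have "\<dots> = (2 * real (Suc m) + 1) * (legendre_lc (Suc m) * real (Suc m)) * legendre_lc (Suc m)"
    unfolding legendre_lc_Suc by (simp add: algebra_simps)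
  also have "\<dots> = (2 * real (Suc m) + 1) * real (Suc m) * (legendre_lc (Suc m))\<^sup>2"
    by (simp add: power2_eq_square algebra_simps)
  finally show ?thesis
    using k by simp
qed

lemma ref_quad_add: "ref_quad k \<xi> \<omega> (p + q) = ref_quad k \<xi> \<omega> p + ref_quad k \<xi> \<omega> q"
  by (simp add: ref_quad_def algebra_simps sum.distrib)

lemma ref_quad_diff: "ref_quad k \<xi> \<omega> (p - q) = ref_quad k \<xi> \<omega> p - ref_quad k \<xi> \<omega> q"
  by (simp add: ref_quad_def algebra_simps sum_subtractf)

lemma ref_quad_smult: "ref_quad k \<xi> \<omega> (smult c p) = c * ref_quad k \<xi> \<omega> p"
  by (simp add: ref_quad_def sum_distrib_left algebra_simps)

definition quad_error :: "nat \<Rightarrow> (nat \<Rightarrow> real) \<Rightarrow> (nat \<Rightarrow> real) \<Rightarrow> real poly \<Rightarrow> real" where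
  "quad_error k \<xi> \<omega> p = integral01 p - ref_quad k \<xi> \<omega> p"

lemma quad_error_add: "quad_error k \<xi> \<omega> (p + q) = quad_error k \<xi> \<omega> p + quad_error k \<xi> \<omega> q"
  by (simp add: quad_error_def ref_quad_add integral01_add)

lemma quad_error_diff: "quad_error k \<xi> \<omega> (p - q) = quad_error k \<xi> \<omega> p - quad_error k \<xi> \<omega> q"
  by (simp add: quad_error_def ref_quad_diff integral01_diff)

lemma quad_error_smult: "quad_error k \<xi> \<omega> (smult c p) = c * quad_error k \<xi> \<omega> p"
  by (simp add: quad_error_def ref_quad_smult integral01_smult algebra_simps)

lemma quad_error_0 [simp]: "quad_error k \<xi> \<omega> 0 = 0"
  by (simp add: quad_error_def ref_quad_def)

lemma quad_error_sum: "quad_error k \<xi> \<omega> (sum f A) = (\<Sum>x\<in>A. quad_error k \<xi> \<omega> (f x))"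
  by (induction A rule: infinite_finite_induct) (simp_all add: quad_error_add)


section \<open>The operator \<open>M\<^sup>*\<close> on a single cell\<close>

lemma mstar_coef_eq_sum: "mstar_coef X A p j = poly p (X 0) + (\<Sum>m\<le>j. A m * poly (pderiv p) (X m))"
  by (induction j) simp_all

lemma mstar_coef_add: "mstar_coef X A (p + q) j = mstar_coef X A p j + mstar_coef X A q j"
  by (induction j) (simp_all add: pderiv_add algebra_simps)

lemma mstar_coef_smult: "mstar_coef X A (smult c p) j = c * mstar_coef X A p j"
  by (induction j) (simp_all add: pderiv_smult algebra_simps)

lemma mstar_coef_0: "mstar_coef X A 0 j = 0"
  by (induction j) simp_all

lemma mstar_coef_lincomb:
  "mstar_coef X A (\<Sum>n\<in>I. smult (b n) (p n)) j = (\<Sum>n\<in>I. b n * mstar_coef X A (p n) j)"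
  by (induction I rule: infinite_finite_induct)
     (simp_all add: mstar_coef_0 mstar_coef_add mstar_coef_smult)

lemma mstar_coef_affine:
  "mstar_coef (\<lambda>j. a + h * X j) (\<lambda>j. h * A j) p j = mstar_coef X A (p \<circ>\<^sub>p [:a, h:]) j"
  by (induction j) (simp_all add: poly_pcompose pderiv_pcompose pderiv_pCons algebra_simps)

lemma sum_partial_sums_mult_diff:
  fixes a V :: "nat \<Rightarrow> real"
  shows "(\<Sum>j\<le>n. (c + (\<Sum>m\<le>j. a m)) * (V (Suc j) - V j))
    = (c + (\<Sum>m\<le>n. a m)) * V (Suc n) - c * V 0 - (\<Sum>j\<le>n. a j * V j)"
  by (induction n) (simp_all add: algebra_simps)

text \<open>For a cell with nodes \<open>X\<close> and weights \<open>A\<close>, \<open>cell_mstar_norm_sq\<close> is the squared \<open>L\<^sup>2\<close>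
  norm of \<open>M\<^sup>* p\<close> on the cell, and if \<open>pderiv P = p\<close> then \<open>cell_star_pairing\<close> is \<open>(p, M\<^sup>* p)\<close>.\<close>

definition cell_mstar_norm_sq :: "nat \<Rightarrow> (nat \<Rightarrow> real) \<Rightarrow> (nat \<Rightarrow> real) \<Rightarrow> real poly \<Rightarrow> real" where
  "cell_mstar_norm_sq k X A p = (\<Sum>j\<le>k. (mstar_coef X A p j)\<^sup>2 * (X (Suc j) - X j))"

definition cell_star_pairing ::
    "nat \<Rightarrow> (nat \<Rightarrow> real) \<Rightarrow> (nat \<Rightarrow> real) \<Rightarrow> real poly \<Rightarrow> real poly \<Rightarrow> real" where
  "cell_star_pairing k X A p P = (\<Sum>j\<le>k. mstar_coef X A p j * (poly P (X (Suc j)) - poly P (X j)))"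

lemma cell_mstar_norm_sq_nonneg:
  "(\<And>j. j \<le> k \<Longrightarrow> X j \<le> X (Suc j)) \<Longrightarrow> 0 \<le> cell_mstar_norm_sq k X A p"
  unfolding cell_mstar_norm_sq_def by (intro sum_nonneg mult_nonneg_nonneg) auto

lemma cell_star_pairing_cong_pderiv:
  "pderiv P = pderiv Q \<Longrightarrow> cell_star_pairing k X A p P = cell_star_pairing k X A p Q"
  unfolding cell_star_pairing_def by (simp add: poly_diff_eq_if_pderiv_eq[of P Q])

lemma cell_star_pairing_smult:
  "cell_star_pairing k X A p (smult c P) = c * cell_star_pairing k X A p P"
  by (simp add: cell_star_pairing_def sum_distrib_left algebra_simps)

lemma cell_mstar_norm_sq_affine:
  "cell_mstar_norm_sq k (\<lambda>j. a + h * X j) (\<lambda>j. h * A j) p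
    = h * cell_mstar_norm_sq k X A (p \<circ>\<^sub>p [:a, h:])"
  unfolding cell_mstar_norm_sq_def mstar_coef_affine sum_distrib_left
  by (rule sum.cong) (simp_all add: algebra_simps)

lemma cell_star_pairing_affine:
  "cell_star_pairing k (\<lambda>j. a + h * X j) (\<lambda>j. h * A j) p P
    = cell_star_pairing k X A (p \<circ>\<^sub>p [:a, h:]) (P \<circ>\<^sub>p [:a, h:])"
  by (simp add: cell_star_pairing_def mstar_coef_affine poly_pcompose mult.commute)


section \<open>Square-integrable functions on a chain of intervals\<close>

lemma set_integral_square_nonneg: "0 \<le> (LBINT x:A. (g x)\<^sup>2 :: real)"
  unfolding set_lebesgue_integral_def
  by (rule Bochner_Integration.integral_nonneg) (auto simp: indicator_def)

lemma mult_set_integral_Icc_le: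
  fixes a b c \<epsilon> :: real
  assumes ab: "a \<le> b" and \<epsilon>: "\<epsilon> > 0" and g: "set_integrable lborel {a..b} (\<lambda>x. (g x)\<^sup>2)"
  shows "c * (LBINT x:{a..b}. g x)
    \<le> \<epsilon> / 2 * c\<^sup>2 * (b - a) + 1 / (2 * \<epsilon>) * (LBINT x:{a..b}. (g x)\<^sup>2)"
proof (cases "set_integrable lborel {a..b} g")
  case False
  then have "(LBINT x:{a..b}. g x) = 0"
    unfolding set_lebesgue_integral_def set_integrable_def by (rule not_integrable_integral_eq)
  then show ?thesis
    using ab \<epsilon> set_integral_square_nonneg[of "{a..b}" g] by simp
next
  case True
  have const: "set_integrable lborel {a..b} (\<lambda>x. \<epsilon> / 2 * c\<^sup>2)"
    by (rule borel_integrable_atLeastAtMost') simp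
  have square: "set_integrable lborel {a..b} (\<lambda>x. 1 / (2 * \<epsilon>) * (g x)\<^sup>2)"
    using g by simp
  have "c * (LBINT x:{a..b}. g x) = (LBINT x:{a..b}. c * g x)"
    by simp
  also have "\<dots> \<le> (LBINT x:{a..b}. \<epsilon> / 2 * c\<^sup>2 + 1 / (2 * \<epsilon>) * (g x)\<^sup>2)"
  proof (rule set_integral_mono)
    show "set_integrable lborel {a..b} (\<lambda>x. c * g x)"
      using True by simp
    show "set_integrable lborel {a..b} (\<lambda>x. \<epsilon> / 2 * c\<^sup>2 + 1 / (2 * \<epsilon>) * (g x)\<^sup>2)"
      using const square by simp
    fix x
    have "0 \<le> (\<epsilon> * c - g x)\<^sup>2 / (2 * \<epsilon>)"
      using \<epsilon> by simp
    also have "\<dots> = \<epsilon> / 2 * c\<^sup>2 + 1 / (2 * \<epsilon>) * (g x)\<^sup>2 - c * g x"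
      using \<epsilon> by (simp add: power2_eq_square field_simps)
    finally show "c * g x \<le> \<epsilon> / 2 * c\<^sup>2 + 1 / (2 * \<epsilon>) * (g x)\<^sup>2"
      by simp
  qed
  also have "\<dots> = (LBINT x:{a..b}. \<epsilon> / 2 * c\<^sup>2) + (LBINT x:{a..b}. 1 / (2 * \<epsilon>) * (g x)\<^sup>2)"
    using const square by simp
  also have "(LBINT x:{a..b}. \<epsilon> / 2 * c\<^sup>2) = \<epsilon> / 2 * c\<^sup>2 * (b - a)"
    using ab by (subst set_integral_const) (simp_all add: emeasure_lborel_Icc_eq)
  finally show ?thesis
    by simp
qed

lemma abs_mult_set_integral_Icc_le:
  fixes a b c \<epsilon> :: real
  assumes "a \<le> b" "\<epsilon> > 0" "set_integrable lborel {a..b} (\<lambda>x. (g x)\<^sup>2)"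
  shows "\<bar>c * (LBINT x:{a..b}. g x)\<bar>
    \<le> \<epsilon> / 2 * c\<^sup>2 * (b - a) + 1 / (2 * \<epsilon>) * (LBINT x:{a..b}. (g x)\<^sup>2)"
  using mult_set_integral_Icc_le[OF assms, of c] mult_set_integral_Icc_le[OF assms, of "-c"]
  by (simp add: abs_le_iff)

lemma set_integral_Icc_split:
  fixes f :: "real \<Rightarrow> real"
  assumes "a \<le> b" "b \<le> c" "set_integrable lborel {a..c} f"
  shows "(LBINT x:{a..b}. f x) + (LBINT x:{b..c}. f x) = (LBINT x:{a..c}. f x)"
proof -
  have "interval_lebesgue_integrable lborel (ereal a) (ereal c) f"
    unfolding interval_lebesgue_integrable_def using assms
    by (auto intro: set_integrable_subset[OF assms(3)] simp: einterval_def)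
  then have "(LBINT x=ereal a..ereal b. f x) + (LBINT x=ereal b..ereal c. f x) = (LBINT x=ereal a..ereal c. f x)"
    by (intro interval_integral_sum) (use assms in \<open>simp add: min_def max_def\<close>)
  then show ?thesis
    using assms by (simp add: interval_integral_Icc)
qed

lemma sum_set_integral_Icc_chain:
  fixes f :: "real \<Rightarrow> real" and y :: "nat \<Rightarrow> real"
  assumes "\<And>j. j < n \<Longrightarrow> y j \<le> y (Suc j)" "set_integrable lborel {y 0..y n} f"
  shows "(\<Sum>j<n. LBINT x:{y j..y (Suc j)}. f x) = (LBINT x:{y 0..y n}. f x)"
  using assms
proof (induction n)
  case 0
  then show ?case
    using interval_integral_Icc[of "y 0" "y 0" f] by simp
next
  case (Suc n)
  have "y 0 \<le> y n"
    using lift_Suc_mono_le_ivl[of "{..<Suc n}" y 0 n] Suc.prems(1) by fastforce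
  moreover have "y n \<le> y (Suc n)"
    using Suc.prems(1) by simp
  moreover have "set_integrable lborel {y 0..y n} f"
    by (rule set_integrable_subset[OF Suc.prems(2)]) (use \<open>y n \<le> y (Suc n)\<close> in auto)
  ultimately show ?case
    using Suc set_integral_Icc_split[of "y 0" "y n" "y (Suc n)" f] by simp
qed


section \<open>The reference cell under Assumption (S)\<close>

locale quadrature_S =
  fixes k :: nat and \<xi> \<omega> :: "nat \<Rightarrow> real"
  assumes assumption_S: "assumption_S k \<xi> \<omega>"
begin

lemma k_ge_1: "k \<ge> 1"
  using assumption_S by (simp add: assumption_S_def)

lemma xi_0: "\<xi> 0 = 0"
  using assumption_S by (simp add: assumption_S_def)

lemma xi_Suc_k: "\<xi> (Suc k) = 1"
  using assumption_S by (simp add: assumption_S_def)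

lemma xi_less_Suc: "j \<le> k \<Longrightarrow> \<xi> j < \<xi> (Suc j)"
  using assumption_S by (simp add: assumption_S_def)

lemma xi_mono: "i \<le> j \<Longrightarrow> j \<le> Suc k \<Longrightarrow> \<xi> i \<le> \<xi> j"
  using lift_Suc_mono_le_ivl[of "{..k}" \<xi> i j] xi_less_Suc by fastforce

lemma xi_bounds: "j \<le> Suc k \<Longrightarrow> 0 \<le> \<xi> j \<and> \<xi> j \<le> 1"
  using xi_mono[of 0 j] xi_mono[of j "Suc k"] xi_0 xi_Suc_k by simp

lemma quad_error_eq_0: "degree p \<le> 2 * k - 1 \<Longrightarrow> quad_error k \<xi> \<omega> p = 0"
  using assumption_S by (simp add: assumption_S_def quad_error_def integral01_def)

lemma quad_error_degree_le_2k:
  assumes "degree p \<le> 2 * k"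
  shows "quad_error k \<xi> \<omega> p = coeff p (2 * k) * quad_error k \<xi> \<omega> (monom 1 (2 * k))"
proof -
  have "degree (p - smult (coeff p (2 * k)) (monom 1 (2 * k))) \<le> 2 * k - 1"
  proof (rule degree_le, intro allI impI)
    fix i
    assume "2 * k - 1 < i"
    then have "i \<ge> 2 * k"
      using k_ge_1 by linarith
    then show "coeff (p - smult (coeff p (2 * k)) (monom 1 (2 * k))) i = 0"
      using assms by (cases "i = 2 * k") (auto simp: coeff_eq_0 coeff_monom)
  qed
  then have "quad_error k \<xi> \<omega> (p - smult (coeff p (2 * k)) (monom 1 (2 * k))) = 0"
    by (rule quad_error_eq_0)
  then show ?thesis
    by (simp add: quad_error_diff quad_error_smult)
qed

lemma quad_error_pderiv_ref_legendre_antideriv: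
  assumes "n \<le> k" "m \<le> k" "\<not> (n = k \<and> m = k)"
  shows "quad_error k \<xi> \<omega> (pderiv (ref_legendre n) * antideriv (ref_legendre m)) = 0"
proof (cases "n = 0")
  case True
  then show ?thesis
    by (simp add: ref_legendre_0)
next
  case False
  have "degree (pderiv (ref_legendre n) * antideriv (ref_legendre m)) \<le> (n - 1) + (m + 1)"
    using degree_mult_le[of "pderiv (ref_legendre n)" "antideriv (ref_legendre m)"]
      degree_antideriv[of "ref_legendre m"]
    by (simp add: degree_pderiv degree_ref_legendre)
  also have "\<dots> \<le> 2 * k - 1"
    using assms False by linarith
  finally show ?thesis
    by (rule quad_error_eq_0)
qed

definition rho :: real where
  "rho = quad_error k \<xi> \<omega> (pderiv (ref_legendre k) * antideriv (ref_legendre k))"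

lemma rho_eq_quad_error_monom:
  "rho = real k * (legendre_lc k)\<^sup>2 / (real k + 1) * quad_error k \<xi> \<omega> (monom 1 (2 * k))"
proof -
  have deg: "degree (pderiv (ref_legendre k)) \<le> k - 1" "degree (antideriv (ref_legendre k)) \<le> k + 1"
    using degree_antideriv[of "ref_legendre k"] by (simp_all add: degree_pderiv degree_ref_legendre)
  have sum: "k - 1 + (k + 1) = 2 * k"
    using k_ge_1 by simp
  have "coeff (pderiv (ref_legendre k)) (k - 1) = real k * legendre_lc k"
    using coeff_pderiv[of "ref_legendre k" "k - 1"] k_ge_1 by (simp add: coeff_ref_legendre_top)
  then have "coeff (pderiv (ref_legendre k) * antideriv (ref_legendre k)) (2 * k)
      = real k * legendre_lc k * (legendre_lc k / real (Suc k))"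
    using coeff_mult_degree_le_sum[OF deg, unfolded sum]
    by (simp add: coeff_antideriv coeff_ref_legendre_top)
  moreover have "degree (pderiv (ref_legendre k) * antideriv (ref_legendre k)) \<le> 2 * k"
    using degree_mult_le[of "pderiv (ref_legendre k)" "antideriv (ref_legendre k)"] deg sum by linarith
  ultimately show ?thesis
    unfolding rho_def using quad_error_degree_le_2k
    by (simp add: power2_eq_square mult_ac add.commute)
qed

lemma quad_error_ref_legendre_neighbours:
  "quad_error k \<xi> \<omega> (ref_legendre (Suc k) * ref_legendre (k - 1))
    = legendre_lc (Suc k) * legendre_lc (k - 1) * quad_error k \<xi> \<omega> (monom 1 (2 * k))"
proof -
  have deg: "degree (ref_legendre (Suc k)) \<le> Suc k" "degree (ref_legendre (k - 1)) \<le> k - 1"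
    by (simp_all add: degree_ref_legendre)
  have sum: "Suc k + (k - 1) = 2 * k"
    using k_ge_1 by simp
  have "degree (ref_legendre (Suc k) * ref_legendre (k - 1)) \<le> 2 * k"
    using degree_mult_le[of "ref_legendre (Suc k)" "ref_legendre (k - 1)"] deg sum by linarith
  then show ?thesis
    using quad_error_degree_le_2k coeff_mult_degree_le_sum[OF deg, unfolded sum]
    by (simp add: coeff_ref_legendre_top)
qed

text \<open>This is where Assumption (S) enters: both \<open>rho\<close> and the quadrature error of
  \<open>ref_legendre (Suc k) * ref_legendre (k - 1)\<close> are multiples of the error on \<open>x\<^sup>2\<^sup>k\<close>.\<close>

lemma rho_condition: "1 / (2 * real k + 1) + rho > 0"
proof -
  define r where "r = quad_error k \<xi> \<omega> (monom 1 (2 * k))"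
  define A where "A = legendre_lc (Suc k) * legendre_lc (k - 1)"
  have k: "real k \<ge> 1"
    using k_ge_1 by simp
  have "ref_quad k \<xi> \<omega> (ref_legendre (Suc k) * ref_legendre (k - 1)) = - (A * r)"
    using quad_error_ref_legendre_neighbours integral01_ref_legendre_orthogonal[of "Suc k" "k - 1"]
    by (simp add: quad_error_def A_def r_def)
  then have "1 / (2 * real k - 1) + A * r > 0"
    using assumption_S by (simp add: assumption_S_def)
  then have pos: "1 + (2 * real k - 1) * (A * r) > 0"
    using k by (simp add: field_simps)
  have "(2 * real k + 1) * rho = (2 * real k + 1) * real k * (legendre_lc k)\<^sup>2 * r / (real k + 1)"
    by (simp add: rho_eq_quad_error_monom r_def)
  also have "\<dots> = A * (2 * real k - 1) * (real k + 1) * r / (real k + 1)"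
    using legendre_lc_neighbours[OF k_ge_1] by (simp add: A_def)
  also have "\<dots> = (2 * real k - 1) * (A * r)"
    using k by simp
  finally have "(2 * real k + 1) * (1 / (2 * real k + 1) + rho) = 1 + (2 * real k - 1) * (A * r)"
    using k by (simp add: distrib_left)
  with pos have "(2 * real k + 1) * (1 / (2 * real k + 1) + rho) > 0"
    by simp
  then show ?thesis
    using k by (simp add: zero_less_mult_iff)
qed

lemma cell_star_pairing_ref:
  assumes v: "degree v \<le> k" and V: "pderiv V = v"
  shows "cell_star_pairing k \<xi> \<omega> v V = integral01 (v * v) + quad_error k \<xi> \<omega> (pderiv v * V)"
proof -
  define a where "a m = \<omega> m * poly (pderiv v) (\<xi> m)" for m
  have "cell_star_pairing k \<xi> \<omega> v V
      = (\<Sum>j\<le>k. (poly v 0 + (\<Sum>m\<le>j. a m)) *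
          ((\<lambda>j. poly V (\<xi> j)) (Suc j) - (\<lambda>j. poly V (\<xi> j)) j))"
    by (simp add: cell_star_pairing_def mstar_coef_eq_sum a_def xi_0)
  also have "\<dots> = (poly v 0 + (\<Sum>m\<le>k. a m)) * poly V 1 - poly v 0 * poly V 0
      - (\<Sum>j\<le>k. a j * poly V (\<xi> j))"
    by (subst sum_partial_sums_mult_diff) (simp add: xi_0 xi_Suc_k)
  also have "(\<Sum>m\<le>k. a m) = poly v 1 - poly v 0 - \<omega> (Suc k) * poly (pderiv v) 1"
  proof -
    have "degree (pderiv v) \<le> 2 * k - 1"
      using v by (simp add: degree_pderiv)
    then have "quad_error k \<xi> \<omega> (pderiv v) = 0"
      by (rule quad_error_eq_0)
    then have "ref_quad k \<xi> \<omega> (pderiv v) = poly v 1 - poly v 0"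
      by (simp add: quad_error_def integral01_pderiv)
    then show ?thesis
      by (simp add: ref_quad_def a_def xi_Suc_k)
  qed
  also have "(\<Sum>j\<le>k. a j * poly V (\<xi> j))
      = ref_quad k \<xi> \<omega> (pderiv v * V) - \<omega> (Suc k) * poly (pderiv v) 1 * poly V 1"
    by (simp add: ref_quad_def a_def xi_Suc_k mult_ac)
  also have "ref_quad k \<xi> \<omega> (pderiv v * V)
      = integral01 (pderiv v * V) - quad_error k \<xi> \<omega> (pderiv v * V)"
    by (simp add: quad_error_def)
  also have "integral01 (pderiv v * V) = poly v 1 * poly V 1 - poly v 0 * poly V 0 - integral01 (v * v)"
    using integral01_by_parts[of V v] V by (simp add: mult.commute)
  finally show ?thesis
    by (simp add: algebra_simps)
qed

lemma cell_star_pairing_legendre_series: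
  assumes V: "pderiv V = legendre_series k b"
  shows "cell_star_pairing k \<xi> \<omega> (legendre_series k b) V
    = (\<Sum>n\<le>k. (b n)\<^sup>2 / (2 * real n + 1)) + (b k)\<^sup>2 * rho"
proof -
  define v where "v = legendre_series k b"
  define W where "W = (\<Sum>n\<le>k. smult (b n) (antideriv (ref_legendre n)))"
  have v: "degree v \<le> k"
    unfolding v_def legendre_series_def
    by (rule degree_sum_le) (auto intro: order.trans[OF degree_smult_le] simp: degree_ref_legendre)
  have W: "pderiv W = v"
    by (simp add: W_def v_def legendre_series_def pderiv_sum pderiv_smult)
  have "cell_star_pairing k \<xi> \<omega> v V = cell_star_pairing k \<xi> \<omega> v W"
    using V W by (intro cell_star_pairing_cong_pderiv) (simp add: v_def)
  also have "\<dots> = integral01 (v * v) + quad_error k \<xi> \<omega> (pderiv v * W)"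
    by (rule cell_star_pairing_ref[OF v W])
  also have "integral01 (v * v) = (\<Sum>n\<le>k. (b n)\<^sup>2 / (2 * real n + 1))"
    unfolding v_def by (rule integral01_legendre_series_square)
  also have "quad_error k \<xi> \<omega> (pderiv v * W) = (b k)\<^sup>2 * rho"
  proof -
    have "pderiv v * W
        = (\<Sum>n\<le>k. \<Sum>m\<le>k. smult (b n * b m) (pderiv (ref_legendre n) * antideriv (ref_legendre m)))"
      unfolding v_def W_def legendre_series_def pderiv_sum pderiv_smult sum_product
      by (simp only: mult_smult_left mult_smult_right smult_smult)
         (intro sum.cong refl, simp add: mult.commute)
    then have "quad_error k \<xi> \<omega> (pderiv v * W)
        = (\<Sum>n\<le>k. \<Sum>m\<le>k. b n * b m *
            quad_error k \<xi> \<omega> (pderiv (ref_legendre n) * antideriv (ref_legendre m)))"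
      by (simp add: quad_error_sum quad_error_smult)
    also have "\<dots> = (\<Sum>n\<le>k. \<Sum>m\<le>k. if n = k then if m = k then (b k)\<^sup>2 * rho else 0 else 0)"
      by (intro sum.cong refl)
         (auto simp: quad_error_pderiv_ref_legendre_antideriv rho_def power2_eq_square)
    also have "\<dots> = (\<Sum>n\<le>k. if n = k then (b k)\<^sup>2 * rho else 0)"
      by (intro sum.cong refl) simp
    finally show ?thesis
      by simp
  qed
  finally show ?thesis
    unfolding v_def .
qed

lemma cell_star_pairing_legendre_series_ge:
  assumes V: "pderiv V = legendre_series k b"
  shows "min (1 / (2 * real k + 1)) (1 / (2 * real k + 1) + rho) * (\<Sum>n\<le>k. (b n)\<^sup>2)
    \<le> cell_star_pairing k \<xi> \<omega> (legendre_series k b) V"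
proof -
  define \<mu> where "\<mu> = min (1 / (2 * real k + 1)) (1 / (2 * real k + 1) + rho)"
  have summand: "\<mu> * (b n)\<^sup>2 \<le> (b n)\<^sup>2 / (2 * real n + 1) + (if n = k then (b n)\<^sup>2 * rho else 0)"
    if "n \<le> k" for n
  proof (cases "n = k")
    case True
    have "\<mu> \<le> 1 / (2 * real k + 1) + rho"
      by (simp add: \<mu>_def)
    then have "(b k)\<^sup>2 * \<mu> \<le> (b k)\<^sup>2 * (1 / (2 * real k + 1) + rho)"
      by (rule mult_left_mono) simp
    with True show ?thesis
      by (simp add: distrib_left mult.commute)
  next
    case False
    have "\<mu> \<le> 1 / (2 * real n + 1)"
      using that by (simp add: \<mu>_def frac_le min.coboundedI1)
    then have "\<mu> * (b n)\<^sup>2 \<le> 1 / (2 * real n + 1) * (b n)\<^sup>2"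
      by (rule mult_right_mono) simp
    with False show ?thesis
      by simp
  qed
  have "\<mu> * (\<Sum>n\<le>k. (b n)\<^sup>2)
      \<le> (\<Sum>n\<le>k. (b n)\<^sup>2 / (2 * real n + 1) + (if n = k then (b n)\<^sup>2 * rho else 0))"
    unfolding sum_distrib_left by (rule sum_mono) (simp add: summand)
  also have "\<dots> = cell_star_pairing k \<xi> \<omega> (legendre_series k b) V"
    by (simp add: cell_star_pairing_legendre_series[OF V] sum.distrib)
  finally show ?thesis
    unfolding \<mu>_def .
qed

lemma cell_mstar_norm_sq_legendre_series_le:
  "cell_mstar_norm_sq k \<xi> \<omega> (legendre_series k b)
    \<le> (\<Sum>n\<le>k. (b n)\<^sup>2) * (\<Sum>n\<le>k. cell_mstar_norm_sq k \<xi> \<omega> (ref_legendre n))"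
proof -
  have "cell_mstar_norm_sq k \<xi> \<omega> (legendre_series k b)
      = (\<Sum>j\<le>k. (\<Sum>n\<le>k. b n * mstar_coef \<xi> \<omega> (ref_legendre n) j)\<^sup>2 * (\<xi> (Suc j) - \<xi> j))"
    by (simp add: cell_mstar_norm_sq_def legendre_series_def mstar_coef_lincomb)
  also have "\<dots> \<le> (\<Sum>j\<le>k. ((\<Sum>n\<le>k. (b n)\<^sup>2) * (\<Sum>n\<le>k. (mstar_coef \<xi> \<omega> (ref_legendre n) j)\<^sup>2))
      * (\<xi> (Suc j) - \<xi> j))"
    by (intro sum_mono mult_right_mono Cauchy_Schwarz_ineq_sum) (simp add: less_imp_le xi_less_Suc)
  also have "\<dots> = (\<Sum>n\<le>k. (b n)\<^sup>2) *
      (\<Sum>j\<le>k. \<Sum>n\<le>k. (mstar_coef \<xi> \<omega> (ref_legendre n) j)\<^sup>2 * (\<xi> (Suc j) - \<xi> j))"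
    by (simp add: sum_distrib_left sum_distrib_right mult_ac)
  also have "\<dots> = (\<Sum>n\<le>k. (b n)\<^sup>2) * (\<Sum>n\<le>k. cell_mstar_norm_sq k \<xi> \<omega> (ref_legendre n))"
    by (subst sum.swap) (simp add: cell_mstar_norm_sq_def)
  finally show ?thesis .
qed

definition mstar_const :: real where
  "mstar_const = (1 + (\<Sum>n\<le>k. cell_mstar_norm_sq k \<xi> \<omega> (ref_legendre n)))
    / min (1 / (2 * real k + 1)) (1 / (2 * real k + 1) + rho)"

lemma cell_mstar_norm_sq_ref_nonneg: "0 \<le> cell_mstar_norm_sq k \<xi> \<omega> p"
  by (rule cell_mstar_norm_sq_nonneg) (simp add: less_imp_le xi_less_Suc)

lemma mstar_const_pos: "mstar_const > 0"
  unfolding mstar_const_def using rho_condition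
  by (intro divide_pos_pos add_pos_nonneg sum_nonneg cell_mstar_norm_sq_ref_nonneg) auto

lemma ref_cell_mstar_norm_sq_le:
  assumes "degree v \<le> k" "pderiv V = v"
  shows "cell_mstar_norm_sq k \<xi> \<omega> v \<le> mstar_const * cell_star_pairing k \<xi> \<omega> v V"
proof -
  obtain b where v: "v = legendre_series k b"
    using ref_legendre_basis[OF assms(1)] by blast
  define B where "B = (\<Sum>n\<le>k. (b n)\<^sup>2)"
  define K0 where "K0 = (\<Sum>n\<le>k. cell_mstar_norm_sq k \<xi> \<omega> (ref_legendre n))"
  define \<mu> where "\<mu> = min (1 / (2 * real k + 1)) (1 / (2 * real k + 1) + rho)"
  define q where "q = cell_star_pairing k \<xi> \<omega> v V"
  have \<mu>: "\<mu> > 0"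
    using rho_condition by (simp add: \<mu>_def)
  have K0: "K0 \<ge> 0"
    unfolding K0_def by (intro sum_nonneg cell_mstar_norm_sq_ref_nonneg)
  have "B \<le> q / \<mu>"
    using cell_star_pairing_legendre_series_ge[of V b] assms(2) v \<mu>
    by (simp add: B_def q_def \<mu>_def pos_le_divide_eq mult.commute)
  have "cell_mstar_norm_sq k \<xi> \<omega> v \<le> B * K0"
    unfolding v B_def K0_def by (rule cell_mstar_norm_sq_legendre_series_le)
  also have "\<dots> \<le> B * (1 + K0)"
    by (intro mult_left_mono) (simp_all add: B_def sum_nonneg)
  also have "\<dots> \<le> q / \<mu> * (1 + K0)"
    using \<open>B \<le> q / \<mu>\<close> K0 by (intro mult_right_mono) auto
  also have "\<dots> = mstar_const * q"
    by (simp add: mstar_const_def K0_def \<mu>_def)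
  finally show ?thesis
    unfolding q_def .
qed

lemma cell_mstar_norm_sq_le:
  assumes h: "h > 0" and p: "degree p \<le> k" and P: "pderiv P = p"
  shows "cell_mstar_norm_sq k (\<lambda>j. a + h * \<xi> j) (\<lambda>j. h * \<omega> j) p
    \<le> mstar_const * cell_star_pairing k (\<lambda>j. a + h * \<xi> j) (\<lambda>j. h * \<omega> j) p P"
proof -
  define v where "v = p \<circ>\<^sub>p [:a, h:]"
  define V where "V = smult (1 / h) (P \<circ>\<^sub>p [:a, h:])"
  have v: "degree v \<le> k"
    using p by (simp add: v_def degree_pcompose)
  have V: "pderiv V = v"
    using h P by (simp add: V_def v_def pderiv_smult pderiv_pcompose pderiv_pCons)
  have "cell_mstar_norm_sq k (\<lambda>j. a + h * \<xi> j) (\<lambda>j. h * \<omega> j) p = h * cell_mstar_norm_sq k \<xi> \<omega> v"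
    by (simp add: cell_mstar_norm_sq_affine v_def)
  also have "\<dots> \<le> h * (mstar_const * cell_star_pairing k \<xi> \<omega> v V)"
    using ref_cell_mstar_norm_sq_le[OF v V] h by simp
  also have "\<dots> = mstar_const * cell_star_pairing k (\<lambda>j. a + h * \<xi> j) (\<lambda>j. h * \<omega> j) p P"
    using h by (simp add: cell_star_pairing_affine cell_star_pairing_smult V_def v_def)
  finally show ?thesis .
qed

end


section \<open>Estimates on the mesh\<close>

lemma mesh_cell_size_pos: "mesh N xs \<Longrightarrow> i < N \<Longrightarrow> cell_size xs i > 0"
  by (simp add: mesh_def cell_size_def)

lemma mesh_mono: "mesh N xs \<Longrightarrow> i \<le> j \<Longrightarrow> j \<le> N \<Longrightarrow> xs i \<le> xs j"
  using lift_Suc_mono_le_ivl[of "{..<N}" xs i j] by (fastforce simp: mesh_def less_imp_le)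

context quadrature_S
begin

lemma node_eq: "node xs \<xi> i = (\<lambda>j. xs i + cell_size xs i * \<xi> j)"
  by (simp add: node_def fun_eq_iff)

lemma weight_eq: "weight xs \<omega> i = (\<lambda>j. cell_size xs i * \<omega> j)"
  by (simp add: weight_def fun_eq_iff)

lemma node_le_Suc: "mesh N xs \<Longrightarrow> i < N \<Longrightarrow> j \<le> k \<Longrightarrow> node xs \<xi> i j \<le> node xs \<xi> i (Suc j)"
  using xi_less_Suc[of j] mesh_cell_size_pos[of N xs i] by (simp add: node_def)

lemma node_bounds:
  assumes "mesh N xs" "i < N" "j \<le> Suc k"
  shows "xs 0 \<le> node xs \<xi> i j \<and> node xs \<xi> i j \<le> xs N"
proof -
  have "xs 0 \<le> xs i" "xs (Suc i) \<le> xs N"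
    using assms by (simp_all add: mesh_mono)
  moreover have "0 \<le> cell_size xs i * \<xi> j" "cell_size xs i * \<xi> j \<le> cell_size xs i"
    using mesh_cell_size_pos[OF assms(1,2)] xi_bounds[OF assms(3)] by (simp_all add: mult_left_le)
  ultimately show ?thesis
    by (simp add: node_def cell_size_def)
qed

definition mstar_norm_sq :: "nat \<Rightarrow> (nat \<Rightarrow> real) \<Rightarrow> (nat \<Rightarrow> real poly) \<Rightarrow> real" where
  "mstar_norm_sq N xs G = (\<Sum>i<N. cell_mstar_norm_sq k (node xs \<xi> i) (weight xs \<omega> i) (G i))"

lemma mstar_norm_sq_nonneg: "mesh N xs \<Longrightarrow> 0 \<le> mstar_norm_sq N xs G"
  unfolding mstar_norm_sq_def by (intro sum_nonneg cell_mstar_norm_sq_nonneg node_le_Suc) auto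

lemma star_ip_diag_eq:
  assumes "mesh N xs"
  shows "star_ip k N xs \<xi> \<omega> G G
    = (\<Sum>i<N. cell_star_pairing k (node xs \<xi> i) (weight xs \<omega> i) (G i) (antideriv (G i)))"
  unfolding star_ip_def pair_Mstar_def cell_star_pairing_def
  using set_integral_poly_pderiv[OF node_le_Suc[OF assms], of _ _ "antideriv (G _)"]
  by (intro sum.cong refl) simp

lemma mstar_norm_sq_le_star_ip:
  assumes "mesh N xs" "Vk k N G"
  shows "mstar_norm_sq N xs G \<le> mstar_const * star_ip k N xs \<xi> \<omega> G G"
  unfolding mstar_norm_sq_def star_ip_diag_eq[OF assms(1)] sum_distrib_left
  using assms unfolding node_eq weight_eq
  by (intro sum_mono cell_mstar_norm_sq_le) (auto simp: Vk_def mesh_cell_size_pos)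

lemma sum_cells_set_integral:
  fixes f :: "real \<Rightarrow> real"
  assumes mesh: "mesh N xs" and f: "set_integrable lborel {xs 0..xs N} f"
  shows "(\<Sum>i<N. \<Sum>j\<le>k. LBINT x:{node xs \<xi> i j..node xs \<xi> i (Suc j)}. f x)
    = (LBINT x:{xs 0..xs N}. f x)"
proof -
  have "(\<Sum>j\<le>k. LBINT x:{node xs \<xi> i j..node xs \<xi> i (Suc j)}. f x) = (LBINT x:{xs i..xs (Suc i)}. f x)"
    if i: "i < N" for i
  proof -
    have "set_integrable lborel {node xs \<xi> i 0..node xs \<xi> i (Suc k)} f"
      using node_bounds[OF mesh i, of 0] node_bounds[OF mesh i, of "Suc k"]
      by (intro set_integrable_subset[OF f]) auto
    then have "(\<Sum>j<Suc k. LBINT x:{node xs \<xi> i j..node xs \<xi> i (Suc j)}. f x)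
        = (LBINT x:{node xs \<xi> i 0..node xs \<xi> i (Suc k)}. f x)"
      using node_le_Suc[OF mesh i] by (intro sum_set_integral_Icc_chain) auto
    then show ?thesis
      by (simp add: lessThan_Suc_atMost node_def xi_0 xi_Suc_k cell_size_def)
  qed
  then have "(\<Sum>i<N. \<Sum>j\<le>k. LBINT x:{node xs \<xi> i j..node xs \<xi> i (Suc j)}. f x)
      = (\<Sum>i<N. LBINT x:{xs i..xs (Suc i)}. f x)"
    by simp
  also have "\<dots> = (LBINT x:{xs 0..xs N}. f x)"
    using mesh f by (intro sum_set_integral_Icc_chain) (auto simp: mesh_def less_imp_le)
  finally show ?thesis .
qed

lemma abs_pair_Mstar_le:
  assumes mesh: "mesh N xs" and g: "L2_on {xs 0..xs N} g" and \<epsilon>: "\<epsilon> > 0"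
  shows "\<bar>pair_Mstar k N xs \<xi> \<omega> (\<lambda>i. g) G\<bar>
    \<le> \<epsilon> / 2 * mstar_norm_sq N xs G + 1 / (2 * \<epsilon>) * L2_norm_sq {xs 0..xs N} g"
proof -
  define c where "c i j = mstar_coef (node xs \<xi> i) (weight xs \<omega> i) (G i) j" for i j
  define I where "I i j = {node xs \<xi> i j..node xs \<xi> i (Suc j)}" for i j
  have g2: "set_integrable lborel {xs 0..xs N} (\<lambda>x. (g x)\<^sup>2)"
    using g by (simp add: L2_on_def)
  have "\<bar>pair_Mstar k N xs \<xi> \<omega> (\<lambda>i. g) G\<bar> \<le> (\<Sum>i<N. \<Sum>j\<le>k. \<bar>c i j * (LBINT x:I i j. g x)\<bar>)"
    unfolding pair_Mstar_def c_def I_def by (rule order.trans[OF sum_abs sum_mono]) (rule sum_abs)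
  also have "\<dots> \<le> (\<Sum>i<N. \<Sum>j\<le>k. \<epsilon> / 2 * (c i j)\<^sup>2 * (node xs \<xi> i (Suc j) - node xs \<xi> i j)
      + 1 / (2 * \<epsilon>) * (LBINT x:I i j. (g x)\<^sup>2))"
    unfolding I_def
    using node_bounds[OF mesh] node_le_Suc[OF mesh]
    by (intro sum_mono abs_mult_set_integral_Icc_le \<epsilon> set_integrable_subset[OF g2]) auto
  also have "\<dots> = \<epsilon> / 2 * mstar_norm_sq N xs G
      + 1 / (2 * \<epsilon>) * (\<Sum>i<N. \<Sum>j\<le>k. LBINT x:I i j. (g x)\<^sup>2)"
    by (simp add: mstar_norm_sq_def cell_mstar_norm_sq_def c_def sum.distrib sum_distrib_left mult_ac)
  also have "(\<Sum>i<N. \<Sum>j\<le>k. LBINT x:I i j. (g x)\<^sup>2) = L2_norm_sq {xs 0..xs N} g"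
    unfolding I_def L2_norm_sq_def by (rule sum_cells_set_integral[OF mesh g2])
  finally show ?thesis .
qed

end

lemma sum_mult_le_of_abs_le:
  fixes d P B :: "nat \<Rightarrow> real"
  assumes P: "\<And>\<kappa>. \<kappa> \<le> l \<Longrightarrow> \<bar>P \<kappa>\<bar> \<le> a + B \<kappa>" and B: "\<And>\<kappa>. \<kappa> \<le> l \<Longrightarrow> 0 \<le> B \<kappa>"
    and a: "0 \<le> a" and D: "(\<Sum>\<kappa>\<le>l. \<bar>d \<kappa>\<bar>) \<le> D"
  shows "(\<Sum>\<kappa>\<le>l. d \<kappa> * P \<kappa>) \<le> D * a + D * (\<Sum>\<kappa>\<le>l. B \<kappa>)"
proof -
  have d: "\<bar>d \<kappa>\<bar> \<le> D" if "\<kappa> \<le> l" for \<kappa>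
    using D member_le_sum[of \<kappa> "{..l}" "\<lambda>\<kappa>. \<bar>d \<kappa>\<bar>"] that by auto
  have "(\<Sum>\<kappa>\<le>l. d \<kappa> * P \<kappa>) \<le> (\<Sum>\<kappa>\<le>l. \<bar>d \<kappa>\<bar> * a + \<bar>d \<kappa>\<bar> * B \<kappa>)"
  proof (rule sum_mono)
    fix \<kappa>
    assume "\<kappa> \<in> {..l}"
    then have "\<bar>d \<kappa>\<bar> * \<bar>P \<kappa>\<bar> \<le> \<bar>d \<kappa>\<bar> * (a + B \<kappa>)"
      using P by (intro mult_left_mono) auto
    moreover have "d \<kappa> * P \<kappa> \<le> \<bar>d \<kappa>\<bar> * \<bar>P \<kappa>\<bar>"
      by (simp only: abs_mult[symmetric] abs_ge_self)
    ultimately show "d \<kappa> * P \<kappa> \<le> \<bar>d \<kappa>\<bar> * a + \<bar>d \<kappa>\<bar> * B \<kappa>"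
      by (simp add: distrib_left)
  qed
  also have "\<dots> = (\<Sum>\<kappa>\<le>l. \<bar>d \<kappa>\<bar>) * a + (\<Sum>\<kappa>\<le>l. \<bar>d \<kappa>\<bar> * B \<kappa>)"
    by (simp add: sum.distrib sum_distrib_right)
  also have "\<dots> \<le> D * a + D * (\<Sum>\<kappa>\<le>l. B \<kappa>)"
    unfolding sum_distrib_left
    using D a B d by (intro add_mono mult_right_mono sum_mono) auto
  finally show ?thesis .
qed

lemma le_of_absorbing_bound:
  fixes X \<Phi> S D K :: real
  assumes D: "D > 0" and K: "K > 0" and \<Phi>: "\<Phi> \<le> K * X"
    and X: "\<And>\<epsilon>. \<epsilon> > 0 \<Longrightarrow> X \<le> D * (\<epsilon> / 2 * \<Phi>) + D * (1 / (2 * \<epsilon>) * S)"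
  shows "X \<le> D\<^sup>2 * K * S"
proof -
  define \<epsilon> where "\<epsilon> = 1 / (D * K)"
  have \<epsilon>: "\<epsilon> > 0"
    using D K by (simp add: \<epsilon>_def)
  have "D * (\<epsilon> / 2 * \<Phi>) \<le> D * (\<epsilon> / 2 * (K * X))"
    using D \<epsilon> \<Phi> by (intro mult_left_mono) auto
  also have "\<dots> = X / 2"
    using D K by (simp add: \<epsilon>_def)
  finally have "X \<le> X / 2 + D * (1 / (2 * \<epsilon>) * S)"
    using X[OF \<epsilon>] by linarith
  moreover have "D * (1 / (2 * \<epsilon>) * S) = D\<^sup>2 * K * S / 2"
    by (simp add: \<epsilon>_def power2_eq_square)
  ultimately show ?thesis
    by linarith
qed

theorem proposition4p14:
  fixes k s :: nat and d :: "nat \<Rightarrow> nat \<Rightarrow> real" and \<xi> \<omega> :: "nat \<Rightarrow> real" and Cq :: real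
  assumes "assumption_S k \<xi> \<omega>"
  shows "\<exists>C>0. \<forall>(N::nat) (xs::nat \<Rightarrow> real) (g::nat \<Rightarrow> nat \<Rightarrow> real \<Rightarrow> real)
            (G::nat \<Rightarrow> real poly) (n::nat) (l::nat).
     mesh N xs \<longrightarrow> quasi_uniform Cq N xs \<longrightarrow> l < s \<longrightarrow>
     (\<forall>\<kappa>\<le>l. L2_on {xs 0..xs N} (g n \<kappa>)) \<longrightarrow>
     Vk k N G \<longrightarrow>
     (\<forall>W. Vk k N W \<longrightarrow>
        star_ip k N xs \<xi> \<omega> G W =
          (\<Sum>\<kappa>\<le>l. d l \<kappa> * pair_Mstar k N xs \<xi> \<omega> (\<lambda>i. g n \<kappa>) W)) \<longrightarrow>
     star_ip k N xs \<xi> \<omega> G G \<le> C * (\<Sum>\<kappa>\<le>l. L2_norm_sq {xs 0..xs N} (g n \<kappa>))"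
proof -
  interpret quadrature_S k \<xi> \<omega>
    by unfold_locales (rule assms)
  define D where "D = 1 + (\<Sum>l<s. \<Sum>\<kappa>\<le>l. \<bar>d l \<kappa>\<bar>)"
  have D: "D > 0"
    unfolding D_def by (simp add: add_pos_nonneg sum_nonneg)
  show ?thesis
  proof (intro exI[of _ "D\<^sup>2 * mstar_const"] conjI allI impI)
    show "D\<^sup>2 * mstar_const > 0"
      using D mstar_const_pos by simp
    fix N xs g G n l
    assume mesh: "mesh N xs" and "l < s" and g: "\<forall>\<kappa>\<le>l. L2_on {xs 0..xs N} (g n \<kappa>)"
      and G: "Vk k N G" and eq: "\<forall>W. Vk k N W \<longrightarrow> star_ip k N xs \<xi> \<omega> G W =
          (\<Sum>\<kappa>\<le>l. d l \<kappa> * pair_Mstar k N xs \<xi> \<omega> (\<lambda>i. g n \<kappa>) W)"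
    have "(\<Sum>\<kappa>\<le>l. \<bar>d l \<kappa>\<bar>) \<le> D"
      using \<open>l < s\<close> member_le_sum[of l "{..<s}" "\<lambda>l. \<Sum>\<kappa>\<le>l. \<bar>d l \<kappa>\<bar>"]
      by (simp add: D_def sum_nonneg)
    then have "star_ip k N xs \<xi> \<omega> G G \<le> D * (\<epsilon> / 2 * mstar_norm_sq N xs G)
        + D * (1 / (2 * \<epsilon>) * (\<Sum>\<kappa>\<le>l. L2_norm_sq {xs 0..xs N} (g n \<kappa>)))" if "\<epsilon> > 0" for \<epsilon>
      unfolding eq[rule_format, OF G] sum_distrib_left[of "1 / (2 * \<epsilon>)"]
      using abs_pair_Mstar_le[OF mesh _ that] g that mstar_norm_sq_nonneg[OF mesh]
      by (intro sum_mult_le_of_abs_le) (auto simp: L2_norm_sq_def set_integral_square_nonneg)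
    then show "star_ip k N xs \<xi> \<omega> G G \<le> D\<^sup>2 * mstar_const * (\<Sum>\<kappa>\<le>l. L2_norm_sq {xs 0..xs N} (g n \<kappa>))"
      by (intro le_of_absorbing_bound[OF D mstar_const_pos mstar_norm_sq_le_star_ip[OF mesh G]])
  qed
qed

end
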